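(* Fix a monomial order on $S=K[x_1,\ldots,x_n]$ and let $J$ and $E$ be ideals of $S$. The following conditions are equivalent: (a) $\mathrm{in}(J+E)=\mathrm{in}(J)+\mathrm{in}(E)$; (b) for any $\mathcal G_J\in \mathrm{Gr}(J)$ and any $\mathcal G_E\in\mathrm{Gr}(E)$, we have $\mathcal G_J\cup\mathcal G_E\in \mathrm{Gr}(J+E)$; (c) there exist $\mathcal G_J\in \mathrm{Gr}(J)$ and $\mathcal G_E\in\mathrm{Gr}(E)$ such that $\mathcal G_J\cup\mathcal G_E\in \mathrm{Gr}(J+E)$; (d) $\mathrm{in}(J\cap E)=\mathrm{in}(J)\cap\mathrm{in}(E)$; (e) for any nonzero $f\in J$ and nonzero $g\in E$ there exists $h\in J\cap E$ with $\mathrm{in}(h)=\mathrm{lcm}(\mathrm{in}(f),\mathrm{in}(g))$; (f) for any $0\neq h\in J+E$ there exist $f\in J$ and $g\in E$ with $h=f-g$ and such that either one of $f,g$ is zero, or both are nonzero and $\mathrm{in}(f)\neq \mathrm{in}(g)$.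
   Context: $K$ is a field and $S=K[x_1,\ldots,x_n]$ with a fixed monomial order. For $0\neq f\in S$, $\mathrm{in}(f)$ denotes its leading monomial and $\mathrm{LT}(f)$ its leading term. For an ideal $I\subseteq S$, $\mathrm{in}(I)$ is the ideal generated by $\{\mathrm{in}(f): 0\ne f\in I\}$, and $\mathrm{Gr}(I)$ denotes the set of all Gröbner bases of $I$ with respect to the fixed monomial order. *)

theory Defs
  imports "HOL-Library.Poly_Mapping"
begin

text \<open>Polynomials in the variables of the finite type 'v over a field 'a are
  finitely supported maps from monomials (exponent vectors) to coefficients.\<close>

type_synonym ('v, 'a) mpoly = "('v \<Rightarrow>\<^sub>0 nat) \<Rightarrow>\<^sub>0 'a"

text \<open>A monomial order, given as its non-strict relation ord (ord s t means s \<le> t):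
  a total order on monomials, compatible with multiplication, with 1 the least monomial.\<close>
definition monomial_order :: "(('v \<Rightarrow>\<^sub>0 nat) \<Rightarrow> ('v \<Rightarrow>\<^sub>0 nat) \<Rightarrow> bool) \<Rightarrow> bool" where
  "monomial_order ord \<longleftrightarrow>
     (\<forall>s. ord s s) \<and>
     (\<forall>s t. ord s t \<and> ord t s \<longrightarrow> s = t) \<and>
     (\<forall>s t u. ord s t \<and> ord t u \<longrightarrow> ord s u) \<and>
     (\<forall>s t. ord s t \<or> ord t s) \<and>
     (\<forall>s t u. ord s t \<longrightarrow> ord (s + u) (t + u)) \<and>
     (\<forall>s. ord 0 s)"

definition lm :: "(('v \<Rightarrow>\<^sub>0 nat) \<Rightarrow> ('v \<Rightarrow>\<^sub>0 nat) \<Rightarrow> bool) \<Rightarrow> ('v, 'a::zero) mpoly \<Rightarrow> ('v \<Rightarrow>\<^sub>0 nat)" where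
  "lm ord f = (THE m. m \<in> Poly_Mapping.keys f \<and> (\<forall>m' \<in> Poly_Mapping.keys f. ord m' m))"

definition mono :: "('v \<Rightarrow>\<^sub>0 nat) \<Rightarrow> ('v, 'a::{zero,one}) mpoly" where
  "mono m = Poly_Mapping.single m 1"

definition is_ideal :: "'r::comm_ring_1 set \<Rightarrow> bool" where
  "is_ideal I \<longleftrightarrow> 0 \<in> I \<and> (\<forall>x\<in>I. \<forall>y\<in>I. x + y \<in> I) \<and> (\<forall>r. \<forall>x\<in>I. r * x \<in> I)"

definition ideal_gen :: "'r::comm_ring_1 set \<Rightarrow> 'r set" where
  "ideal_gen A = \<Inter>{I. is_ideal I \<and> A \<subseteq> I}"

definition ideal_sum :: "'r::comm_ring_1 set \<Rightarrow> 'r set \<Rightarrow> 'r set" where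
  "ideal_sum I J = {x + y | x y. x \<in> I \<and> y \<in> J}"

definition init_ideal :: "(('v \<Rightarrow>\<^sub>0 nat) \<Rightarrow> ('v \<Rightarrow>\<^sub>0 nat) \<Rightarrow> bool) \<Rightarrow> ('v, 'a::field) mpoly set \<Rightarrow> ('v, 'a) mpoly set" where
  "init_ideal ord I = ideal_gen {mono (lm ord f) | f. f \<in> I \<and> f \<noteq> 0}"

definition groebner_basis :: "(('v \<Rightarrow>\<^sub>0 nat) \<Rightarrow> ('v \<Rightarrow>\<^sub>0 nat) \<Rightarrow> bool) \<Rightarrow> ('v, 'a::field) mpoly set \<Rightarrow> ('v, 'a) mpoly set \<Rightarrow> bool" where
  "groebner_basis ord I G \<longleftrightarrow> finite G \<and> G \<subseteq> I \<and> 0 \<notin> G \<and>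
     init_ideal ord I = ideal_gen {mono (lm ord g) | g. g \<in> G}"

lift_definition mlcm :: "('v \<Rightarrow>\<^sub>0 nat) \<Rightarrow> ('v \<Rightarrow>\<^sub>0 nat) \<Rightarrow> ('v \<Rightarrow>\<^sub>0 nat)" is
  "\<lambda>s t v. max (s v) (t v)"
proof -
  fix s t :: "'v \<Rightarrow> nat"
  assume "finite {x. s x \<noteq> 0}" "finite {x. t x \<noteq> 0}"
  then have "finite ({x. s x \<noteq> 0} \<union> {x. t x \<noteq> 0})" by simp
  then show "finite {x. max (s x) (t x) \<noteq> 0}"
    by (rule rev_finite_subset) auto
qed

end

theory Submission
  imports Defs "HOL.Topological_Spaces"
begin

text \<open>
  Everything reduces to the sets LMs I of leading monomials of the nonzero elements of an ideal I.
  Such a set is closed under multiplication by monomials, and in(I) consists exactly of the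
  polynomials supported in LMs I. So (a) says that LMs (J + E) \<subseteq> LMs J \<union> LMs E, while (d)
  and (e) say that LMs J \<inter> LMs E \<subseteq> LMs (J \<inter> E); (b) and (c) are (a) read through Groebner
  bases, which exist by Dickson's lemma.

  The two set conditions are linked by the property that every h in J + E splits as h = f + g with
  f \<in> J, g \<in> E and distinct leading monomials, which is (f) up to the sign of g. Condition (a)
  yields such splittings by cancelling the leading term of h against an element of J or E and
  descending along the monomial order, a well-order by Dickson's lemma. Splittings yield (d): if
  f \<in> J and g \<in> E have the same leading term and f - g = f' + g' is split, then
  f - f' = g + g' lies in J \<inter> E and has the leading monomial of f. Conversely, under (d) a sum
  f + g with in(f) = in(g) is rewritten as (f - k) + (g + k) with k \<in> J \<inter> E of the same leading
  term; unless this already splits, both leading monomials have dropped, and we descend again.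
\<close>

lemma is_ideal_ideal_gen: "is_ideal (ideal_gen A)"
  unfolding ideal_gen_def is_ideal_def by auto

lemma ideal_gen_subset: "A \<subseteq> ideal_gen A"
  unfolding ideal_gen_def by auto

lemma ideal_gen_least: "is_ideal I \<Longrightarrow> A \<subseteq> I \<Longrightarrow> ideal_gen A \<subseteq> I"
  unfolding ideal_gen_def by auto

lemma ideal_gen_mono: "A \<subseteq> B \<Longrightarrow> ideal_gen A \<subseteq> ideal_gen B"
  by (meson is_ideal_ideal_gen ideal_gen_least ideal_gen_subset order_trans)

context
  fixes I :: "'r::comm_ring_1 set"
  assumes I: "is_ideal I"
begin

lemma ideal_zero: "0 \<in> I"
  using I unfolding is_ideal_def by blast

lemma ideal_add: "x \<in> I \<Longrightarrow> y \<in> I \<Longrightarrow> x + y \<in> I"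
  using I unfolding is_ideal_def by blast

lemma ideal_mult: "x \<in> I \<Longrightarrow> r * x \<in> I"
  using I unfolding is_ideal_def by blast

lemma ideal_uminus: "x \<in> I \<Longrightarrow> - x \<in> I"
  using ideal_mult[of x "- 1"] by simp

lemma ideal_diff: "x \<in> I \<Longrightarrow> y \<in> I \<Longrightarrow> x - y \<in> I"
  using ideal_add[of x "- y"] ideal_uminus[of y] by simp

lemma sum_in_ideal: "(\<And>x. x \<in> S \<Longrightarrow> f x \<in> I) \<Longrightarrow> sum f S \<in> I"
  by (induction S rule: infinite_finite_induct) (auto intro: ideal_zero ideal_add)

end

lemma is_ideal_Int: "is_ideal I \<Longrightarrow> is_ideal J \<Longrightarrow> is_ideal (I \<inter> J)"
  unfolding is_ideal_def by auto

lemma is_ideal_ideal_sum: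
  assumes I: "is_ideal I" and J: "is_ideal J"
  shows "is_ideal (ideal_sum I J)"
  unfolding is_ideal_def
proof (intro conjI ballI allI)
  show "0 \<in> ideal_sum I J"
    unfolding ideal_sum_def using ideal_zero[OF I] ideal_zero[OF J] by force
next
  fix a b assume "a \<in> ideal_sum I J" "b \<in> ideal_sum I J"
  then obtain x y x' y' where "a = x + y" "b = x' + y'" "x \<in> I" "x' \<in> I" "y \<in> J" "y' \<in> J"
    unfolding ideal_sum_def by blast
  then have "a + b = (x + x') + (y + y')" "x + x' \<in> I" "y + y' \<in> J"
    using ideal_add[OF I] ideal_add[OF J] by (simp_all add: ac_simps)
  then show "a + b \<in> ideal_sum I J"
    unfolding ideal_sum_def by blast
next
  fix r a assume "a \<in> ideal_sum I J"
  then obtain x y where "a = x + y" "x \<in> I" "y \<in> J"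
    unfolding ideal_sum_def by blast
  then have "r * a = r * x + r * y" "r * x \<in> I" "r * y \<in> J"
    using ideal_mult[OF I] ideal_mult[OF J] by (simp_all add: distrib_left)
  then show "r * a \<in> ideal_sum I J"
    unfolding ideal_sum_def by blast
qed

lemma ideal_sum_least: "is_ideal K \<Longrightarrow> I \<subseteq> K \<Longrightarrow> J \<subseteq> K \<Longrightarrow> ideal_sum I J \<subseteq> K"
  unfolding ideal_sum_def using ideal_add by blast

lemma ideal_sum_subset_left: "is_ideal J \<Longrightarrow> I \<subseteq> ideal_sum I J"
  unfolding ideal_sum_def using ideal_zero by force

lemma ideal_sum_subset_right: "is_ideal I \<Longrightarrow> J \<subseteq> ideal_sum I J"
  unfolding ideal_sum_def using ideal_zero by force

lemma ideal_gen_Un: "ideal_gen (X \<union> Y) = ideal_sum (ideal_gen X) (ideal_gen Y)"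
proof
  have "ideal_gen X \<subseteq> ideal_sum (ideal_gen X) (ideal_gen Y)"
    by (rule ideal_sum_subset_left[OF is_ideal_ideal_gen])
  moreover have "ideal_gen Y \<subseteq> ideal_sum (ideal_gen X) (ideal_gen Y)"
    by (rule ideal_sum_subset_right[OF is_ideal_ideal_gen])
  ultimately have "X \<union> Y \<subseteq> ideal_sum (ideal_gen X) (ideal_gen Y)"
    using ideal_gen_subset[of X] ideal_gen_subset[of Y] by blast
  then show "ideal_gen (X \<union> Y) \<subseteq> ideal_sum (ideal_gen X) (ideal_gen Y)"
    by (intro ideal_gen_least is_ideal_ideal_sum is_ideal_ideal_gen)
next
  have "ideal_gen X \<subseteq> ideal_gen (X \<union> Y)" "ideal_gen Y \<subseteq> ideal_gen (X \<union> Y)"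
    by (simp_all add: ideal_gen_mono)
  then show "ideal_sum (ideal_gen X) (ideal_gen Y) \<subseteq> ideal_gen (X \<union> Y)"
    unfolding ideal_sum_def using ideal_add[OF is_ideal_ideal_gen, of _ "X \<union> Y"] by blast
qed

lemma lookup_single_mult:
  fixes f :: "('v, 'a::comm_ring_1) mpoly"
  shows "Poly_Mapping.lookup (Poly_Mapping.single u c * f) (u + t) = c * Poly_Mapping.lookup f t"
proof -
  have "Poly_Mapping.lookup (Poly_Mapping.single u c * f) (u + t)
      = (\<Sum>l. Poly_Mapping.lookup (Poly_Mapping.single u c) l
               * (\<Sum>q. Poly_Mapping.lookup f q when u + t = l + q))"
    by (rule lookup_mult)
  also have "\<dots> = (\<Sum>l. c * (\<Sum>q. Poly_Mapping.lookup f q when q = t) when l = u)"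
    by (rule Sum_any.cong) (auto simp: lookup_single when_def)
  finally show ?thesis by simp
qed

lemma keys_single_mult:
  fixes f :: "('v, 'a::comm_ring_1) mpoly"
  shows "Poly_Mapping.keys (Poly_Mapping.single u c * f) \<subseteq> (+) u ` Poly_Mapping.keys f"
  using keys_mult[of "Poly_Mapping.single u c" f] by (auto split: if_splits)

lemma sum_single_lookup:
  "(\<Sum>t\<in>Poly_Mapping.keys p. Poly_Mapping.single t (Poly_Mapping.lookup p t)) = p"
proof (rule poly_mapping_eqI)
  fix k
  have "Poly_Mapping.lookup (\<Sum>t\<in>Poly_Mapping.keys p. Poly_Mapping.single t (Poly_Mapping.lookup p t)) k
      = (\<Sum>t\<in>Poly_Mapping.keys p. if t = k then Poly_Mapping.lookup p t else 0)"
    unfolding lookup_sum by (rule sum.cong) (auto simp: lookup_single when_def)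
  also have "\<dots> = Poly_Mapping.lookup p k"
    by (simp add: sum.delta in_keys_iff)
  finally show "Poly_Mapping.lookup (\<Sum>t\<in>Poly_Mapping.keys p. Poly_Mapping.single t (Poly_Mapping.lookup p t)) k
      = Poly_Mapping.lookup p k" .
qed

lemma keys_mono: "Poly_Mapping.keys (mono t :: ('v, 'a::zero_neq_one) mpoly) = {t}"
  unfolding mono_def by simp

section \<open>Divisibility of monomials and Dickson's lemma\<close>

definition monom_le :: "('v \<Rightarrow>\<^sub>0 nat) \<Rightarrow> ('v \<Rightarrow>\<^sub>0 nat) \<Rightarrow> bool" where
  "monom_le s t \<longleftrightarrow> (\<forall>v. Poly_Mapping.lookup s v \<le> Poly_Mapping.lookup t v)"

lemma monom_le_iff_add: "monom_le s t \<longleftrightarrow> (\<exists>u. t = s + u)"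
proof
  assume "monom_le s t"
  then have "t = s + (t - s)"
    by (intro poly_mapping_eqI) (simp add: monom_le_def lookup_add lookup_minus)
  then show "\<exists>u. t = s + u" ..
qed (auto simp: monom_le_def lookup_add)

lemma monom_le_trans: "monom_le r s \<Longrightarrow> monom_le s t \<Longrightarrow> monom_le r t"
  unfolding monom_le_def using order_trans by blast

lemma monom_le_mlcm: "monom_le s (mlcm s t)" "monom_le t (mlcm s t)"
  unfolding monom_le_def by (simp_all add: mlcm.rep_eq)

lemma mlcm_same: "mlcm t t = t"
  by (rule poly_mapping_eqI) (simp add: mlcm.rep_eq)

lemma nat_seq_mono_subseq:
  fixes s :: "nat \<Rightarrow> nat"
  obtains \<phi> where "strict_mono \<phi>" "incseq (s \<circ> \<phi>)"
proof -
  obtain f where f: "strict_mono f" "monoseq (s \<circ> f)"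
    using seq_monosub[of s] by (auto simp: comp_def)
  show thesis
  proof (cases "incseq (s \<circ> f)")
    case True
    then show thesis using f(1) that by blast
  next
    case False
    then have anti: "s (f n) \<le> s (f m)" if "m \<le> n" for m n
      using f(2) that unfolding monoseq_def incseq_def by auto
    obtain k where k: "\<And>n. s (f k) \<le> s (f n)"
      using ex_has_least_nat[of "\<lambda>_. True" 0 "s \<circ> f"] by auto
    \<comment> \<open>a non-increasing sequence of naturals is constant from its minimum on\<close>
    have "s (f (n + k)) = s (f k)" for n
      using anti[of k "n + k"] k[of "n + k"] by simp
    then have "incseq (s \<circ> f \<circ> (\<lambda>n. n + k))"
      by (simp add: incseq_def)
    moreover have "strict_mono (f \<circ> (\<lambda>n. n + k))"
      using f(1) by (intro strict_mono_o) (auto simp: strict_mono_def)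
    ultimately show thesis
      using that by (metis comp_assoc)
  qed
qed

lemma monom_seq_mono_subseq:
  fixes m :: "nat \<Rightarrow> ('v \<Rightarrow>\<^sub>0 nat)"
  assumes "finite V"
  shows "\<exists>\<phi>. strict_mono \<phi> \<and> (\<forall>v\<in>V. incseq (\<lambda>i. Poly_Mapping.lookup (m (\<phi> i)) v))"
  using assms
proof (induction V rule: finite_induct)
  case empty
  show ?case by (rule exI[of _ id]) (simp add: strict_mono_def)
next
  case (insert a V)
  then obtain \<phi> where \<phi>: "strict_mono \<phi>" "\<forall>v\<in>V. incseq (\<lambda>i. Poly_Mapping.lookup (m (\<phi> i)) v)"
    by blast
  obtain \<psi> where \<psi>: "strict_mono \<psi>" "incseq ((\<lambda>i. Poly_Mapping.lookup (m (\<phi> i)) a) \<circ> \<psi>)"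
    by (rule nat_seq_mono_subseq)
  have "incseq (\<lambda>i. Poly_Mapping.lookup (m (\<phi> (\<psi> i))) v)" if "v \<in> V" for v
    using \<phi>(2) that strict_mono_leD[OF \<psi>(1)] by (auto simp: incseq_def)
  then show ?case
    using \<psi> strict_mono_o[OF \<phi>(1) \<psi>(1)] by (intro exI[of _ "\<phi> \<circ> \<psi>"]) (auto simp: comp_def)
qed

theorem dickson:
  fixes m :: "nat \<Rightarrow> ('v::finite \<Rightarrow>\<^sub>0 nat)"
  obtains i j where "i < j" "monom_le (m i) (m j)"
proof -
  obtain \<phi> where "strict_mono \<phi>" "\<forall>v. incseq (\<lambda>i. Poly_Mapping.lookup (m (\<phi> i)) v)"
    using monom_seq_mono_subseq[of UNIV m] by auto
  then have "\<phi> 0 < \<phi> 1" "monom_le (m (\<phi> 0)) (m (\<phi> 1))"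
    by (auto simp: strict_mono_def monom_le_def incseq_def)
  then show thesis by (rule that)
qed

definition multiples :: "('v \<Rightarrow>\<^sub>0 nat) set \<Rightarrow> ('v \<Rightarrow>\<^sub>0 nat) set" where
  "multiples X = {x + u | x u. x \<in> X}"

lemma mem_multiplesI:
  assumes "x \<in> X"
  shows "x \<in> multiples X"
proof -
  have "x = x + 0" by simp
  then show ?thesis
    using assms unfolding multiples_def by blast
qed

lemma add_mem_multiples:
  assumes "s \<in> multiples X"
  shows "u + s \<in> multiples X"
proof -
  obtain x v where "s = x + v" "x \<in> X"
    using assms unfolding multiples_def by blast
  then have "u + s = x + (v + u)" "x \<in> X"
    by (simp_all add: ac_simps)
  then show ?thesis
    unfolding multiples_def by blast
qed

lemma monom_le_antisym_degree:
  fixes s t :: "'v::finite \<Rightarrow>\<^sub>0 nat"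
  assumes le: "monom_le s t"
    and deg: "(\<Sum>v\<in>UNIV. Poly_Mapping.lookup t v) \<le> (\<Sum>v\<in>UNIV. Poly_Mapping.lookup s v)"
  shows "s = t"
proof -
  have "(\<Sum>v\<in>UNIV. Poly_Mapping.lookup s v) \<le> (\<Sum>v\<in>UNIV. Poly_Mapping.lookup t v)"
    using le by (intro sum_mono) (simp add: monom_le_def)
  then have "(\<Sum>v\<in>UNIV. Poly_Mapping.lookup s v) = (\<Sum>v\<in>UNIV. Poly_Mapping.lookup t v)"
    using deg by simp
  then have "Poly_Mapping.lookup s v = Poly_Mapping.lookup t v" for v
    by (rule sum_mono_inv) (use le in \<open>auto simp: monom_le_def\<close>)
  then show ?thesis
    by (rule poly_mapping_eqI)
qed

lemma ex_minimal_monom_le: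
  fixes M :: "('v::finite \<Rightarrow>\<^sub>0 nat) set"
  assumes "m \<in> M"
  obtains z where "z \<in> M" "monom_le z m" "\<And>y. y \<in> M \<Longrightarrow> monom_le y z \<Longrightarrow> y = z"
proof -
  define deg :: "('v \<Rightarrow>\<^sub>0 nat) \<Rightarrow> nat" where "deg s = (\<Sum>v\<in>UNIV. Poly_Mapping.lookup s v)" for s
  obtain z where z: "z \<in> M" "monom_le z m"
    and z_min: "\<And>y. y \<in> M \<Longrightarrow> monom_le y m \<Longrightarrow> deg z \<le> deg y"
    using ex_has_least_nat[of "\<lambda>y. y \<in> M \<and> monom_le y m" m deg] assms
    by (auto simp: monom_le_def)
  have "y = z" if y: "y \<in> M" "monom_le y z" for y
    using monom_le_antisym_degree[OF y(2)] z_min[OF y(1) monom_le_trans[OF y(2) z(2)]]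
    unfolding deg_def .
  then show thesis
    by (rule that[OF z])
qed

lemma finite_minimal_generators:
  fixes M :: "('v::finite \<Rightarrow>\<^sub>0 nat) set"
  obtains F where "F \<subseteq> M" "finite F" "M \<subseteq> multiples F"
proof
  define F where "F = {m\<in>M. \<forall>m'\<in>M. monom_le m' m \<longrightarrow> m' = m}"
  show "F \<subseteq> M" unfolding F_def by blast
  show "finite F"
  proof (rule ccontr)
    assume "infinite F"
    then obtain g :: "nat \<Rightarrow> _" where g: "inj g" "range g \<subseteq> F"
      using infinite_countable_subset by blast
    obtain i j where "i < j" "monom_le (g i) (g j)"
      by (rule dickson)
    then have "g i = g j"
      using g(2) unfolding F_def by blast
    with \<open>i < j\<close> g(1) show False
      by (simp add: inj_eq)
  qed
  show "M \<subseteq> multiples F"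
  proof
    fix m assume "m \<in> M"
    then obtain z where "z \<in> M" "monom_le z m" "\<And>y. y \<in> M \<Longrightarrow> monom_le y z \<Longrightarrow> y = z"
      by (rule ex_minimal_monom_le) blast
    then have "z \<in> F" "\<exists>u. m = z + u"
      unfolding F_def monom_le_iff_add[symmetric] by blast+
    then show "m \<in> multiples F"
      unfolding multiples_def by blast
  qed
qed

section \<open>Monomial ideals and sets of leading monomials\<close>

lemma is_ideal_supported_in_multiples:
  "is_ideal {p :: ('v, 'a::comm_ring_1) mpoly. Poly_Mapping.keys p \<subseteq> multiples X}"
  (is "is_ideal ?S")
  unfolding is_ideal_def
proof (intro conjI ballI allI)
  fix p q assume "p \<in> ?S" "q \<in> ?S"
  then show "p + q \<in> ?S"
    using keys_add[of p q] by auto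
next
  fix r p assume p: "p \<in> ?S"
  have "k \<in> multiples X" if k: "k \<in> Poly_Mapping.keys (r * p)" for k
  proof -
    obtain a b where "k = a + b" "b \<in> Poly_Mapping.keys p"
      using keys_mult[of r p] k by blast
    then show ?thesis
      using p add_mem_multiples by auto
  qed
  then show "r * p \<in> ?S"
    by blast
qed simp

lemma ideal_gen_monomials:
  "ideal_gen (mono ` X) = {p :: ('v, 'a::comm_ring_1) mpoly. Poly_Mapping.keys p \<subseteq> multiples X}"
  (is "_ = ?S")
proof
  have "mono ` X \<subseteq> ?S"
    using mem_multiplesI by (auto simp: keys_mono)
  with is_ideal_supported_in_multiples show "ideal_gen (mono ` X) \<subseteq> ?S"
    by (rule ideal_gen_least)
next
  show "?S \<subseteq> ideal_gen (mono ` X)"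
  proof
    fix p :: "('v, 'a) mpoly" assume p: "p \<in> ?S"
    have "Poly_Mapping.single t (Poly_Mapping.lookup p t) \<in> ideal_gen (mono ` X)"
      if key: "t \<in> Poly_Mapping.keys p" for t
    proof -
      obtain x u where t: "t = x + u" and x: "x \<in> X"
        using p key unfolding multiples_def by blast
      have "Poly_Mapping.single t (Poly_Mapping.lookup p t)
          = Poly_Mapping.single u (Poly_Mapping.lookup p t) * mono x"
        unfolding mono_def t by (simp add: mult_single add.commute)
      moreover have "mono x \<in> ideal_gen (mono ` X)"
        using ideal_gen_subset x by blast
      ultimately show ?thesis
        using ideal_mult[OF is_ideal_ideal_gen] by simp
    qed
    then have "(\<Sum>t\<in>Poly_Mapping.keys p. Poly_Mapping.single t (Poly_Mapping.lookup p t))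
        \<in> ideal_gen (mono ` X)"
      by (intro sum_in_ideal is_ideal_ideal_gen)
    then show "p \<in> ideal_gen (mono ` X)"
      by (simp only: sum_single_lookup)
  qed
qed

definition LMs :: "(('v \<Rightarrow>\<^sub>0 nat) \<Rightarrow> ('v \<Rightarrow>\<^sub>0 nat) \<Rightarrow> bool) \<Rightarrow> ('v, 'a::zero) mpoly set \<Rightarrow> ('v \<Rightarrow>\<^sub>0 nat) set" where
  "LMs ord I = {lm ord f | f. f \<in> I \<and> f \<noteq> 0}"

lemma init_ideal_eq_ideal_gen_LMs: "init_ideal ord I = ideal_gen (mono ` LMs ord I)"
  unfolding init_ideal_def LMs_def by (rule arg_cong[where f = ideal_gen]) auto

lemma LMs_mono: "I \<subseteq> I' \<Longrightarrow> LMs ord I \<subseteq> LMs ord I'"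
  unfolding LMs_def by blast

lemma LMs_memI: "f \<in> I \<Longrightarrow> f \<noteq> 0 \<Longrightarrow> lm ord f \<in> LMs ord I"
  unfolding LMs_def by blast

lemma is_ideal_init_ideal: "is_ideal (init_ideal ord I)"
  unfolding init_ideal_def by (rule is_ideal_ideal_gen)

lemma init_ideal_mono: "I \<subseteq> I' \<Longrightarrow> init_ideal ord I \<subseteq> init_ideal ord I'"
  unfolding init_ideal_eq_ideal_gen_LMs by (intro ideal_gen_mono image_mono LMs_mono)

lemma groebner_basis_Un_iff:
  assumes J: "is_ideal J" and E: "is_ideal E"
    and GJ: "groebner_basis ord J GJ" and GE: "groebner_basis ord E GE"
  shows "groebner_basis ord (ideal_sum J E) (GJ \<union> GE)
     \<longleftrightarrow> init_ideal ord (ideal_sum J E) = ideal_sum (init_ideal ord J) (init_ideal ord E)"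
proof -
  have union: "{mono (lm ord g) | g. g \<in> GJ \<union> GE}
      = {mono (lm ord g) | g. g \<in> GJ} \<union> {mono (lm ord g) | g. g \<in> GE}"
    by blast
  have "init_ideal ord J = ideal_gen {mono (lm ord g) | g. g \<in> GJ}"
    "init_ideal ord E = ideal_gen {mono (lm ord g) | g. g \<in> GE}"
    using GJ GE unfolding groebner_basis_def by blast+
  then have gens: "ideal_gen {mono (lm ord g) | g. g \<in> GJ \<union> GE}
      = ideal_sum (init_ideal ord J) (init_ideal ord E)"
    unfolding union ideal_gen_Un by simp
  have "finite (GJ \<union> GE)" "0 \<notin> GJ \<union> GE" "GJ \<union> GE \<subseteq> ideal_sum J E"
    using GJ GE ideal_sum_subset_left[OF E] ideal_sum_subset_right[OF J]
    unfolding groebner_basis_def by blast+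
  then show ?thesis
    unfolding groebner_basis_def[of ord "ideal_sum J E"] gens by blast
qed

locale monomial_ord =
  fixes ord :: "('v \<Rightarrow>\<^sub>0 nat) \<Rightarrow> ('v \<Rightarrow>\<^sub>0 nat) \<Rightarrow> bool"
  assumes monomial_order: "monomial_order ord"
begin

definition ord_strict :: "('v \<Rightarrow>\<^sub>0 nat) \<Rightarrow> ('v \<Rightarrow>\<^sub>0 nat) \<Rightarrow> bool" where
  "ord_strict s t \<longleftrightarrow> ord s t \<and> s \<noteq> t"

sublocale mo: linorder ord ord_strict
  using monomial_order unfolding monomial_order_def ord_strict_def
  by unfold_locales blast+

lemma ord_add_left:
  assumes "ord s t"
  shows "ord (u + s) (u + t)"
proof -
  have "ord (s + u) (t + u)"
    using monomial_order assms unfolding monomial_order_def by blast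
  then show ?thesis
    by (simp only: add.commute[of s u] add.commute[of t u])
qed

lemma ord_monom_le:
  assumes "monom_le s t"
  shows "ord s t"
proof -
  obtain u where "t = s + u"
    using assms by (auto simp: monom_le_iff_add)
  moreover have "ord 0 u"
    using monomial_order unfolding monomial_order_def by blast
  then have "ord (s + 0) (s + u)"
    by (rule ord_add_left)
  ultimately show ?thesis
    by simp
qed

lemma lm_eq_Max:
  fixes f :: "('v, 'a::zero) mpoly"
  assumes "f \<noteq> 0"
  shows "lm ord f = mo.Max (Poly_Mapping.keys f)"
  unfolding lm_def
proof (rule the_equality)
  have "Poly_Mapping.keys f \<noteq> {}"
    using assms by simp
  then show "mo.Max (Poly_Mapping.keys f) \<in> Poly_Mapping.keys f
      \<and> (\<forall>m'\<in>Poly_Mapping.keys f. ord m' (mo.Max (Poly_Mapping.keys f)))"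
    by simp
qed (auto intro: mo.Max_eqI[symmetric])

lemma lm_in_keys: "f \<noteq> 0 \<Longrightarrow> lm ord f \<in> Poly_Mapping.keys f"
  by (simp add: lm_eq_Max)

lemma lm_max:
  assumes "t \<in> Poly_Mapping.keys f"
  shows "ord t (lm ord f)"
proof -
  have "f \<noteq> 0" using assms by auto
  then show ?thesis using assms by (simp add: lm_eq_Max)
qed

lemma lm_eqI:
  assumes "t \<in> Poly_Mapping.keys f" "\<And>s. s \<in> Poly_Mapping.keys f \<Longrightarrow> ord s t"
  shows "lm ord f = t"
proof -
  have "f \<noteq> 0" using assms(1) by auto
  then show ?thesis using assms by (simp add: lm_eq_Max mo.Max_eqI)
qed

lemma lm_uminus: "lm ord (- f) = lm ord (f :: ('v, 'a::ab_group_add) mpoly)"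
proof -
  have "Poly_Mapping.keys (- f) = Poly_Mapping.keys f"
    by (auto simp: in_keys_iff)
  then show ?thesis
    by (simp only: lm_def)
qed

lemma lm_add_le:
  fixes f g :: "('v, 'a::monoid_add) mpoly"
  assumes "f + g \<noteq> 0" "f = 0 \<or> ord (lm ord f) s" "g = 0 \<or> ord (lm ord g) s"
  shows "ord (lm ord (f + g)) s"
proof -
  have "lm ord (f + g) \<in> Poly_Mapping.keys f \<union> Poly_Mapping.keys g"
    using lm_in_keys[OF assms(1)] keys_add[of f g] by blast
  then show ?thesis
  proof
    assume key: "lm ord (f + g) \<in> Poly_Mapping.keys f"
    then have "ord (lm ord f) s"
      using assms(2) by auto
    then show ?thesis
      by (rule mo.order_trans[OF lm_max[OF key]])
  next
    assume key: "lm ord (f + g) \<in> Poly_Mapping.keys g"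
    then have "ord (lm ord g) s"
      using assms(3) by auto
    then show ?thesis
      by (rule mo.order_trans[OF lm_max[OF key]])
  qed
qed

lemma lm_add_left:
  fixes f g :: "('v, 'a::monoid_add) mpoly"
  assumes f: "f \<noteq> 0" and g: "g = 0 \<or> ord_strict (lm ord g) (lm ord f)"
  shows "f + g \<noteq> 0" and "lm ord (f + g) = lm ord f"
proof -
  have "lm ord f \<notin> Poly_Mapping.keys g"
    using g lm_max mo.leD by fastforce
  then have "Poly_Mapping.lookup (f + g) (lm ord f) = Poly_Mapping.lookup f (lm ord f)"
    by (simp add: lookup_add in_keys_iff)
  then have keys: "lm ord f \<in> Poly_Mapping.keys (f + g)"
    using lm_in_keys[OF f] by (simp add: in_keys_iff)
  then show "f + g \<noteq> 0" by auto
  have "ord s (lm ord f)" if s: "s \<in> Poly_Mapping.keys (f + g)" for s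
  proof -
    have "s \<in> Poly_Mapping.keys f \<or> s \<in> Poly_Mapping.keys g"
      using s keys_add[of f g] by blast
    then show ?thesis
    proof
      assume "s \<in> Poly_Mapping.keys f"
      then show ?thesis by (rule lm_max)
    next
      assume sg: "s \<in> Poly_Mapping.keys g"
      then have "ord_strict (lm ord g) (lm ord f)"
        using g by auto
      then show ?thesis
        using mo.order_trans[OF lm_max[OF sg]] by (simp add: mo.less_imp_le)
    qed
  qed
  then show "lm ord (f + g) = lm ord f"
    by (rule lm_eqI[OF keys])
qed

lemma lm_add_distinct:
  fixes f g :: "('v, 'a::comm_monoid_add) mpoly"
  assumes "f \<noteq> 0" "g \<noteq> 0" "lm ord f \<noteq> lm ord g"
  shows "f + g \<noteq> 0" and "lm ord (f + g) = mo.max (lm ord f) (lm ord g)"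
proof -
  have "f + g \<noteq> 0 \<and> lm ord (f + g) = mo.max (lm ord f) (lm ord g)"
  proof (cases "ord (lm ord f) (lm ord g)")
    case True
    then have "ord_strict (lm ord f) (lm ord g)"
      using assms(3) mo.le_neq_trans by blast
    then show ?thesis
      using lm_add_left[of g f] assms True by (simp add: add.commute mo.max_def)
  next
    case False
    then show ?thesis
      using lm_add_left[of f g] assms by (simp add: mo.not_le mo.max_def)
  qed
  then show "f + g \<noteq> 0" and "lm ord (f + g) = mo.max (lm ord f) (lm ord g)"
    by simp_all
qed

lemma lm_add_summands:
  fixes f g :: "('v, 'a::comm_monoid_add) mpoly"
  assumes "f = 0 \<or> g = 0 \<or> lm ord f \<noteq> lm ord g" and "f + g \<noteq> 0"
  shows "f = 0 \<or> ord (lm ord f) (lm ord (f + g))"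
    and "g = 0 \<or> ord (lm ord g) (lm ord (f + g))"
    and "(f \<noteq> 0 \<and> lm ord (f + g) = lm ord f) \<or> (g \<noteq> 0 \<and> lm ord (f + g) = lm ord g)"
proof -
  have "(f = 0 \<or> ord (lm ord f) (lm ord (f + g))) \<and> (g = 0 \<or> ord (lm ord g) (lm ord (f + g)))
      \<and> ((f \<noteq> 0 \<and> lm ord (f + g) = lm ord f) \<or> (g \<noteq> 0 \<and> lm ord (f + g) = lm ord g))"
  proof (cases "f = 0 \<or> g = 0")
    case True
    then show ?thesis
      using assms(2) by auto
  next
    case False
    then have fg: "f \<noteq> 0" "g \<noteq> 0" "lm ord f \<noteq> lm ord g"
      using assms(1) by auto
    have max: "lm ord (f + g) = mo.max (lm ord f) (lm ord g)"
      by (rule lm_add_distinct(2)[OF fg])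
    have "ord (lm ord f) (lm ord (f + g))" "ord (lm ord g) (lm ord (f + g))"
      unfolding max by (rule mo.max.cobounded1, rule mo.max.cobounded2)
    moreover have "lm ord (f + g) = lm ord f \<or> lm ord (f + g) = lm ord g"
      unfolding max mo.max_def by simp
    ultimately show ?thesis
      using fg by blast
  qed
  then show "f = 0 \<or> ord (lm ord f) (lm ord (f + g))"
    and "g = 0 \<or> ord (lm ord g) (lm ord (f + g))"
    and "(f \<noteq> 0 \<and> lm ord (f + g) = lm ord f) \<or> (g \<noteq> 0 \<and> lm ord (f + g) = lm ord g)"
    by blast+
qed

lemma lm_diff_less:
  fixes p q :: "('v, 'a::ab_group_add) mpoly"
  assumes "p \<noteq> q" "q \<noteq> 0" "lm ord p = lm ord q"
    and "Poly_Mapping.lookup p (lm ord p) = Poly_Mapping.lookup q (lm ord q)"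
  shows "ord_strict (lm ord (p - q)) (lm ord p)"
proof -
  have "p - q \<noteq> 0" using assms(1) by simp
  then have lm: "lm ord (p - q) \<in> Poly_Mapping.keys (p - q)"
    by (rule lm_in_keys)
  then have "lm ord (p - q) \<in> Poly_Mapping.keys p \<or> lm ord (p - q) \<in> Poly_Mapping.keys q"
    using keys_diff[of p q] by blast
  then have "ord (lm ord (p - q)) (lm ord p)"
    using lm_max assms(3) by metis
  moreover have "lm ord (p - q) \<noteq> lm ord p"
    using lm assms(3,4) by (auto simp: in_keys_iff lookup_minus)
  ultimately show ?thesis
    by (simp add: ord_strict_def)
qed

lemma lm_single_mult:
  fixes f :: "('v, 'a::idom) mpoly"
  assumes f: "f \<noteq> 0" and c: "c \<noteq> 0"
  shows "Poly_Mapping.single u c * f \<noteq> 0" and "lm ord (Poly_Mapping.single u c * f) = u + lm ord f"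
proof -
  have keys: "u + lm ord f \<in> Poly_Mapping.keys (Poly_Mapping.single u c * f)"
    using lm_in_keys[OF f] c by (simp add: in_keys_iff lookup_single_mult)
  then show "Poly_Mapping.single u c * f \<noteq> 0" by auto
  have "ord s (u + lm ord f)" if s: "s \<in> Poly_Mapping.keys (Poly_Mapping.single u c * f)" for s
  proof -
    obtain r where "r \<in> Poly_Mapping.keys f" "s = u + r"
      using s keys_single_mult[of u c f] by blast
    then show ?thesis
      by (simp add: ord_add_left lm_max)
  qed
  then show "lm ord (Poly_Mapping.single u c * f) = u + lm ord f"
    by (rule lm_eqI[OF keys])
qed

lemma multiples_LMs:
  fixes I :: "('v, 'a::idom) mpoly set"
  assumes I: "is_ideal I"
  shows "multiples (LMs ord I) = LMs ord I"
proof
  show "multiples (LMs ord I) \<subseteq> LMs ord I"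
  proof
    fix t assume "t \<in> multiples (LMs ord I)"
    then obtain f u where f: "f \<in> I" "f \<noteq> 0" and t: "t = lm ord f + u"
      unfolding multiples_def LMs_def by blast
    have "Poly_Mapping.single u 1 * f \<in> I"
      using ideal_mult[OF I f(1)] .
    then have "lm ord (Poly_Mapping.single u 1 * f) \<in> LMs ord I"
      using lm_single_mult(1)[OF f(2) one_neq_zero] by (rule LMs_memI)
    then show "t \<in> LMs ord I"
      using lm_single_mult[OF f(2), of 1 u] t by (simp add: add.commute)
  qed
  show "LMs ord I \<subseteq> multiples (LMs ord I)"
    unfolding multiples_def by force
qed

lemma LMs_monom_le:
  fixes I :: "('v, 'a::idom) mpoly set"
  assumes "is_ideal I" "s \<in> LMs ord I" "monom_le s t"
  shows "t \<in> LMs ord I"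
  using assms multiples_LMs[OF assms(1)] unfolding monom_le_iff_add multiples_def by blast

lemma init_ideal_eq:
  fixes I :: "('v, 'a::field) mpoly set"
  assumes "is_ideal I"
  shows "init_ideal ord I = {p. Poly_Mapping.keys p \<subseteq> LMs ord I}"
  unfolding init_ideal_eq_ideal_gen_LMs ideal_gen_monomials multiples_LMs[OF assms] ..

lemma mono_in_init_ideal_iff:
  fixes I :: "('v, 'a::field) mpoly set"
  assumes "is_ideal I"
  shows "(mono t :: ('v, 'a) mpoly) \<in> init_ideal ord I \<longleftrightarrow> t \<in> LMs ord I"
  by (simp add: init_ideal_eq[OF assms] keys_mono)

lemma LMs_with_coeff:
  fixes I :: "('v, 'a::field) mpoly set"
  assumes "is_ideal I" "t \<in> LMs ord I" "c \<noteq> 0"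
  obtains k where "k \<in> I" "k \<noteq> 0" "lm ord k = t" "Poly_Mapping.lookup k t = c"
proof -
  obtain f where f: "f \<in> I" "f \<noteq> 0" "lm ord f = t"
    using assms(2) unfolding LMs_def by blast
  have ft: "Poly_Mapping.lookup f t \<noteq> 0"
    using lm_in_keys[OF f(2)] f(3) by (simp add: in_keys_iff)
  let ?k = "Poly_Mapping.single 0 (c / Poly_Mapping.lookup f t) * f"
  show thesis
  proof
    show "?k \<in> I" using ideal_mult[OF assms(1) f(1)] .
    show "?k \<noteq> 0" "lm ord ?k = t"
      using lm_single_mult[OF f(2), of "c / Poly_Mapping.lookup f t" 0] ft assms(3) f(3) by simp_all
    show "Poly_Mapping.lookup ?k t = c"
      using lookup_single_mult[of 0 "c / Poly_Mapping.lookup f t" f t] ft by simp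
  qed
qed

lemma init_ideal_ideal_sum_iff:
  fixes J E :: "('v, 'a::field) mpoly set"
  assumes J: "is_ideal J" and E: "is_ideal E"
  shows "init_ideal ord (ideal_sum J E) = ideal_sum (init_ideal ord J) (init_ideal ord E)
     \<longleftrightarrow> LMs ord (ideal_sum J E) \<subseteq> LMs ord J \<union> LMs ord E"
proof
  assume eq: "init_ideal ord (ideal_sum J E) = ideal_sum (init_ideal ord J) (init_ideal ord E)"
  show "LMs ord (ideal_sum J E) \<subseteq> LMs ord J \<union> LMs ord E"
  proof
    fix t assume "t \<in> LMs ord (ideal_sum J E)"
    then have "(mono t :: ('v, 'a) mpoly) \<in> ideal_sum (init_ideal ord J) (init_ideal ord E)"
      using mono_in_init_ideal_iff[OF is_ideal_ideal_sum[OF J E]] eq by blast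
    then obtain p q where pq: "mono t = p + q" "p \<in> init_ideal ord J" "q \<in> init_ideal ord E"
      unfolding ideal_sum_def by blast
    have "t \<in> Poly_Mapping.keys (p + q)"
      unfolding pq(1)[symmetric] keys_mono by simp
    then have "t \<in> Poly_Mapping.keys p \<union> Poly_Mapping.keys q"
      using keys_add[of p q] by blast
    moreover have "Poly_Mapping.keys p \<subseteq> LMs ord J" "Poly_Mapping.keys q \<subseteq> LMs ord E"
      using pq(2,3) init_ideal_eq[OF J] init_ideal_eq[OF E] by auto
    ultimately show "t \<in> LMs ord J \<union> LMs ord E"
      by blast
  qed
next
  assume LMs_sum: "LMs ord (ideal_sum J E) \<subseteq> LMs ord J \<union> LMs ord E"
  have "init_ideal ord (ideal_sum J E) \<subseteq> ideal_gen (mono ` LMs ord J \<union> mono ` LMs ord E)"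
    unfolding init_ideal_eq_ideal_gen_LMs using LMs_sum by (intro ideal_gen_mono) blast
  also have "\<dots> = ideal_sum (init_ideal ord J) (init_ideal ord E)"
    by (simp add: ideal_gen_Un init_ideal_eq_ideal_gen_LMs)
  finally have "init_ideal ord (ideal_sum J E) \<subseteq> ideal_sum (init_ideal ord J) (init_ideal ord E)" .
  moreover have "ideal_sum (init_ideal ord J) (init_ideal ord E) \<subseteq> init_ideal ord (ideal_sum J E)"
    by (intro ideal_sum_least is_ideal_init_ideal init_ideal_mono
        ideal_sum_subset_left[OF E] ideal_sum_subset_right[OF J])
  ultimately show "init_ideal ord (ideal_sum J E) = ideal_sum (init_ideal ord J) (init_ideal ord E)"
    by (rule antisym)
qed

lemma init_ideal_Int_iff:
  fixes J E :: "('v, 'a::field) mpoly set"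
  assumes J: "is_ideal J" and E: "is_ideal E"
  shows "init_ideal ord (J \<inter> E) = init_ideal ord J \<inter> init_ideal ord E
     \<longleftrightarrow> LMs ord J \<inter> LMs ord E \<subseteq> LMs ord (J \<inter> E)"
proof -
  have JE: "is_ideal (J \<inter> E)"
    using J E by (rule is_ideal_Int)
  have "init_ideal ord (J \<inter> E) = init_ideal ord J \<inter> init_ideal ord E
      \<longleftrightarrow> LMs ord (J \<inter> E) = LMs ord J \<inter> LMs ord E"
  proof
    assume eq: "init_ideal ord (J \<inter> E) = init_ideal ord J \<inter> init_ideal ord E"
    show "LMs ord (J \<inter> E) = LMs ord J \<inter> LMs ord E"
    proof (rule set_eqI)
      fix t
      show "t \<in> LMs ord (J \<inter> E) \<longleftrightarrow> t \<in> LMs ord J \<inter> LMs ord E"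
        using eq mono_in_init_ideal_iff[OF JE, of t] mono_in_init_ideal_iff[OF J, of t]
          mono_in_init_ideal_iff[OF E, of t] by blast
    qed
  next
    assume "LMs ord (J \<inter> E) = LMs ord J \<inter> LMs ord E"
    then show "init_ideal ord (J \<inter> E) = init_ideal ord J \<inter> init_ideal ord E"
      unfolding init_ideal_eq[OF J] init_ideal_eq[OF E] init_ideal_eq[OF JE] by auto
  qed
  moreover have "LMs ord (J \<inter> E) \<subseteq> LMs ord J \<inter> LMs ord E"
    by (simp add: LMs_mono)
  ultimately show ?thesis
    by blast
qed

lemma ex_lm_mlcm_iff:
  fixes J E :: "('v, 'a::field) mpoly set"
  assumes J: "is_ideal J" and E: "is_ideal E"
  shows "(\<forall>f g. f \<in> J \<and> f \<noteq> 0 \<and> g \<in> E \<and> g \<noteq> 0 \<longrightarrow>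
            (\<exists>h \<in> J \<inter> E. h \<noteq> 0 \<and> lm ord h = mlcm (lm ord f) (lm ord g)))
     \<longleftrightarrow> LMs ord J \<inter> LMs ord E \<subseteq> LMs ord (J \<inter> E)"
proof
  assume lcm: "\<forall>f g. f \<in> J \<and> f \<noteq> 0 \<and> g \<in> E \<and> g \<noteq> 0 \<longrightarrow>
            (\<exists>h \<in> J \<inter> E. h \<noteq> 0 \<and> lm ord h = mlcm (lm ord f) (lm ord g))"
  show "LMs ord J \<inter> LMs ord E \<subseteq> LMs ord (J \<inter> E)"
  proof
    fix t assume "t \<in> LMs ord J \<inter> LMs ord E"
    then obtain f g where "f \<in> J" "f \<noteq> 0" "lm ord f = t" "g \<in> E" "g \<noteq> 0" "lm ord g = t"
      unfolding LMs_def by auto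
    then obtain h where "h \<in> J \<inter> E" "h \<noteq> 0" "lm ord h = t"
      using lcm mlcm_same[of t] by metis
    then show "t \<in> LMs ord (J \<inter> E)"
      unfolding LMs_def by blast
  qed
next
  assume LMs_Int: "LMs ord J \<inter> LMs ord E \<subseteq> LMs ord (J \<inter> E)"
  show "\<forall>f g. f \<in> J \<and> f \<noteq> 0 \<and> g \<in> E \<and> g \<noteq> 0 \<longrightarrow>
            (\<exists>h \<in> J \<inter> E. h \<noteq> 0 \<and> lm ord h = mlcm (lm ord f) (lm ord g))"
  proof (intro allI impI)
    fix f g assume fg: "f \<in> J \<and> f \<noteq> 0 \<and> g \<in> E \<and> g \<noteq> 0"
    then have "lm ord f \<in> LMs ord J" "lm ord g \<in> LMs ord E"
      unfolding LMs_def by blast+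
    then have "mlcm (lm ord f) (lm ord g) \<in> LMs ord J \<inter> LMs ord E"
      using LMs_monom_le[OF J _ monom_le_mlcm(1)] LMs_monom_le[OF E _ monom_le_mlcm(2)] by blast
    then have "mlcm (lm ord f) (lm ord g) \<in> LMs ord (J \<inter> E)"
      using LMs_Int by blast
    then show "\<exists>h \<in> J \<inter> E. h \<noteq> 0 \<and> lm ord h = mlcm (lm ord f) (lm ord g)"
      unfolding LMs_def by auto
  qed
qed

end

section \<open>Splitting along distinct leading monomials\<close>

definition distinct_lm_split ::
  "(('v \<Rightarrow>\<^sub>0 nat) \<Rightarrow> ('v \<Rightarrow>\<^sub>0 nat) \<Rightarrow> bool) \<Rightarrow> ('v, 'a::monoid_add) mpoly set \<Rightarrow> ('v, 'a) mpoly set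
     \<Rightarrow> ('v, 'a) mpoly \<Rightarrow> bool" where
  "distinct_lm_split ord X Y h \<longleftrightarrow>
     (\<exists>f\<in>X. \<exists>g\<in>Y. h = f + g \<and> (f = 0 \<or> g = 0 \<or> lm ord f \<noteq> lm ord g))"

lemma distinct_lm_split_zero:
  fixes X Y :: "('v, 'a::comm_ring_1) mpoly set"
  assumes "is_ideal X" "is_ideal Y"
  shows "distinct_lm_split ord X Y 0"
proof -
  have "(0 :: ('v, 'a) mpoly) = 0 + 0" "0 \<in> X" "0 \<in> Y"
    using ideal_zero[OF assms(1)] ideal_zero[OF assms(2)] by simp_all
  then show ?thesis
    unfolding distinct_lm_split_def by blast
qed

lemma distinct_lm_split_commute:
  "distinct_lm_split ord X Y h \<longleftrightarrow> distinct_lm_split ord Y X (h :: ('v, 'a::comm_monoid_add) mpoly)"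
  unfolding distinct_lm_split_def by (metis add.commute)

context monomial_ord
begin

lemma distinct_lm_split_add_leading:
  fixes X Y :: "('v, 'a::comm_ring_1) mpoly set"
  assumes X: "is_ideal X" and k: "k \<in> X" "k \<noteq> 0"
    and r: "distinct_lm_split ord X Y r" "r = 0 \<or> ord_strict (lm ord r) (lm ord k)"
  shows "distinct_lm_split ord X Y (k + r)"
proof -
  obtain f g where fg: "f \<in> X" "g \<in> Y" "r = f + g" and distinct: "f = 0 \<or> g = 0 \<or> lm ord f \<noteq> lm ord g"
    using r(1) unfolding distinct_lm_split_def by blast
  have "(f = 0 \<or> ord_strict (lm ord f) (lm ord k)) \<and> (g = 0 \<or> ord_strict (lm ord g) (lm ord k))"
  proof (cases "r = 0")
    case True
    \<comment> \<open>summands with distinct leading monomials cannot cancel\<close>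
    then have "f = - g"
      using fg(3) by (simp add: eq_neg_iff_add_eq_0)
    then have "f = 0 \<and> g = 0"
      using distinct lm_uminus[of g] by auto
    then show ?thesis
      by simp
  next
    case False
    then show ?thesis
      using lm_add_summands(1,2)[OF distinct] r(2) fg(3) mo.le_less_trans by auto
  qed
  then have small: "f = 0 \<or> ord_strict (lm ord f) (lm ord k)" "g = 0 \<or> ord_strict (lm ord g) (lm ord k)"
    by simp_all
  have "k + f \<noteq> 0" "lm ord (k + f) = lm ord k"
    using lm_add_left[OF k(2) small(1)] by simp_all
  moreover have "k + r = (k + f) + g" "k + f \<in> X"
    using fg ideal_add[OF X k(1)] by (simp_all add: add.assoc)
  ultimately show ?thesis
    unfolding distinct_lm_split_def using fg(2) small(2) by (metis mo.less_irrefl)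
qed

lemma LMs_ideal_sum_of_split:
  fixes X Y :: "('v, 'a::comm_ring_1) mpoly set"
  assumes split: "\<And>h. h \<in> ideal_sum X Y \<Longrightarrow> distinct_lm_split ord X Y h"
  shows "LMs ord (ideal_sum X Y) \<subseteq> LMs ord X \<union> LMs ord Y"
proof
  fix t assume "t \<in> LMs ord (ideal_sum X Y)"
  then obtain h where h: "h \<in> ideal_sum X Y" "h \<noteq> 0" "lm ord h = t"
    unfolding LMs_def by blast
  then obtain f g where fg: "f \<in> X" "g \<in> Y" "h = f + g"
    and distinct: "f = 0 \<or> g = 0 \<or> lm ord f \<noteq> lm ord g"
    using split unfolding distinct_lm_split_def by blast
  then show "t \<in> LMs ord X \<union> LMs ord Y"
    using lm_add_summands(3)[OF distinct] h(2,3) LMs_memI by (metis Un_iff)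
qed

lemma LMs_Int_of_split:
  fixes X Y :: "('v, 'a::field) mpoly set"
  assumes X: "is_ideal X" and Y: "is_ideal Y"
    and split: "\<And>h. h \<in> ideal_sum X Y \<Longrightarrow> distinct_lm_split ord X Y h"
  shows "LMs ord X \<inter> LMs ord Y \<subseteq> LMs ord (X \<inter> Y)"
proof
  fix t assume t: "t \<in> LMs ord X \<inter> LMs ord Y"
  then obtain f where f: "f \<in> X" "f \<noteq> 0" "lm ord f = t"
    unfolding LMs_def by blast
  have "Poly_Mapping.lookup f t \<noteq> 0"
    using lm_in_keys[OF f(2)] f(3) by (simp add: in_keys_iff)
  then obtain g where g: "g \<in> Y" "g \<noteq> 0" "lm ord g = t" "Poly_Mapping.lookup g t = Poly_Mapping.lookup f t"
    using LMs_with_coeff[OF Y] t by (metis IntD2)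
  show "t \<in> LMs ord (X \<inter> Y)"
  proof (cases "f = g")
    case True
    then show ?thesis
      using f g LMs_memI[of f "X \<inter> Y" ord] by simp
  next
    case False
    have "f + - g \<in> ideal_sum X Y"
      unfolding ideal_sum_def using f(1) ideal_uminus[OF Y g(1)] by blast
    then obtain f' g' where fg': "f' \<in> X" "g' \<in> Y" "f - g = f' + g'"
      and distinct: "f' = 0 \<or> g' = 0 \<or> lm ord f' \<noteq> lm ord g'"
      using split unfolding distinct_lm_split_def by fastforce
    have "ord_strict (lm ord (f - g)) t"
      using lm_diff_less[OF False g(2)] f(3) g(3,4) by simp
    then have small: "- f' = 0 \<or> ord_strict (lm ord (- f')) (lm ord f)"
      using lm_add_summands(1)[OF distinct] fg'(3) False f(3) lm_uminus[of f'] mo.le_less_trans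
      by fastforce
    \<comment> \<open>f - f' = g + g' lies in both ideals and keeps the leading monomial of f\<close>
    have nonzero: "f + - f' \<noteq> 0" and lm: "lm ord (f + - f') = t"
      using lm_add_left[OF f(2) small] f(3) by simp_all
    have "f + - f' \<in> X" "f + - f' = g + g'" "g + g' \<in> Y"
      using ideal_diff[OF X f(1) fg'(1)] fg'(3) ideal_add[OF Y g(1) fg'(2)]
      by (simp_all add: algebra_simps)
    then have "f + - f' \<in> X \<inter> Y"
      by simp
    then show ?thesis
      using LMs_memI[OF _ nonzero] lm by metis
  qed
qed

lemma cancel_lm_in_ideal_sum:
  fixes X Y :: "('v, 'a::field) mpoly set"
  assumes X: "is_ideal X" and Y: "is_ideal Y"
    and LMs_sum: "LMs ord (ideal_sum X Y) \<subseteq> LMs ord X \<union> LMs ord Y"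
    and h: "h \<in> ideal_sum X Y" "h \<noteq> 0"
  obtains k where "k \<in> X \<or> k \<in> Y" "k \<noteq> 0" "lm ord k = lm ord h" "h - k \<in> ideal_sum X Y"
    "h - k = 0 \<or> ord_strict (lm ord (h - k)) (lm ord h)"
proof -
  let ?t = "lm ord h"
  have "Poly_Mapping.lookup h ?t \<noteq> 0"
    using lm_in_keys[OF h(2)] by (simp add: in_keys_iff)
  moreover have "?t \<in> LMs ord X \<union> LMs ord Y"
    using LMs_sum LMs_memI[OF h] by blast
  ultimately obtain k where k: "k \<in> X \<or> k \<in> Y" "k \<noteq> 0" "lm ord k = ?t"
    "Poly_Mapping.lookup k ?t = Poly_Mapping.lookup h ?t"
    by (metis LMs_with_coeff Un_iff X Y)
  have "h - k \<in> ideal_sum X Y"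
    using k(1) ideal_diff[OF is_ideal_ideal_sum[OF X Y] h(1)]
      ideal_sum_subset_left[OF Y] ideal_sum_subset_right[OF X] by blast
  moreover have "h - k = 0 \<or> ord_strict (lm ord (h - k)) ?t"
    using lm_diff_less[of h k] k by auto
  ultimately show thesis
    using that k(1-3) by blast
qed

lemma common_lm_transfer:
  fixes X Y :: "('v, 'a::field) mpoly set"
  assumes X: "is_ideal X" and Y: "is_ideal Y"
    and LMs_Int: "LMs ord X \<inter> LMs ord Y \<subseteq> LMs ord (X \<inter> Y)"
    and fg: "f \<in> X" "g \<in> Y" "f \<noteq> 0" "g \<noteq> 0" "lm ord g = lm ord f"
  obtains (distinct) "distinct_lm_split ord X Y (f + g)"
    | (lower) f1 g1 where "f1 \<in> X" "g1 \<in> Y" "f + g = f1 + g1" "lm ord g1 = lm ord f1"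
        "ord_strict (lm ord f1) (lm ord f)"
proof -
  let ?s = "lm ord f"
  have "Poly_Mapping.lookup f ?s \<noteq> 0"
    using lm_in_keys[OF fg(3)] by (simp add: in_keys_iff)
  moreover have "?s \<in> LMs ord (X \<inter> Y)"
    using LMs_Int LMs_memI[OF fg(1,3), of ord] LMs_memI[OF fg(2,4), of ord] fg(5) by auto
  ultimately obtain k where k: "k \<in> X \<inter> Y" "k \<noteq> 0" "lm ord k = ?s"
    "Poly_Mapping.lookup k ?s = Poly_Mapping.lookup f ?s"
    by (metis LMs_with_coeff is_ideal_Int X Y)
  \<comment> \<open>transfer the common leading term, carried by k, from f to g\<close>
  define f1 where "f1 = f - k"
  define g1 where "g1 = g + k"
  have in_ideals: "f1 \<in> X" "g1 \<in> Y" and sum: "f + g = f1 + g1"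
    using ideal_diff[OF X fg(1)] ideal_add[OF Y fg(2)] k(1)
    by (auto simp: f1_def g1_def)
  have f1: "f1 = 0 \<or> ord_strict (lm ord f1) ?s"
    using lm_diff_less[of f k] k f1_def by auto
  have g1: "g1 = 0 \<or> ord (lm ord g1) ?s"
    using lm_add_le[of g k ?s] k(3) fg(5) g1_def by auto
  show thesis
  proof (cases "f1 = 0 \<or> g1 = 0 \<or> lm ord f1 \<noteq> lm ord g1")
    case True
    then show thesis
      using distinct in_ideals unfolding distinct_lm_split_def sum by blast
  next
    case False
    then show thesis
      using lower[OF in_ideals sum] f1 by auto
  qed
qed

lemma ex_diff_distinct_lm_iff:
  fixes J E :: "('v, 'a::comm_ring_1) mpoly set"
  assumes J: "is_ideal J" and E: "is_ideal E"
  shows "(\<forall>h \<in> ideal_sum J E. h \<noteq> 0 \<longrightarrow>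
            (\<exists>f \<in> J. \<exists>g \<in> E. h = f - g \<and>
               (f = 0 \<or> g = 0 \<or> (f \<noteq> 0 \<and> g \<noteq> 0 \<and> lm ord f \<noteq> lm ord g))))
     \<longleftrightarrow> (\<forall>h \<in> ideal_sum J E. distinct_lm_split ord J E h)"
proof -
  have split_iff: "(\<exists>f \<in> J. \<exists>g \<in> E. h = f - g \<and>
        (f = 0 \<or> g = 0 \<or> (f \<noteq> 0 \<and> g \<noteq> 0 \<and> lm ord f \<noteq> lm ord g)))
      \<longleftrightarrow> distinct_lm_split ord J E h" for h
  proof
    assume "\<exists>f \<in> J. \<exists>g \<in> E. h = f - g \<and>
        (f = 0 \<or> g = 0 \<or> (f \<noteq> 0 \<and> g \<noteq> 0 \<and> lm ord f \<noteq> lm ord g))"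
    then obtain f g where "f \<in> J" "g \<in> E" "h = f - g"
      and "f = 0 \<or> g = 0 \<or> lm ord f \<noteq> lm ord g"
      by blast
    moreover have "- g \<in> E" "h = f + - g" "lm ord (- g) = lm ord g"
      using ideal_uminus[OF E \<open>g \<in> E\<close>] \<open>h = f - g\<close> lm_uminus by simp_all
    ultimately show "distinct_lm_split ord J E h"
      unfolding distinct_lm_split_def by (metis neg_equal_0_iff_equal)
  next
    assume "distinct_lm_split ord J E h"
    then obtain f g where "f \<in> J" "g \<in> E" "h = f + g"
      and "f = 0 \<or> g = 0 \<or> lm ord f \<noteq> lm ord g"
      unfolding distinct_lm_split_def by blast
    moreover have "- g \<in> E" "h = f - - g" "lm ord (- g) = lm ord g"
      using ideal_uminus[OF E \<open>g \<in> E\<close>] \<open>h = f + g\<close> lm_uminus by simp_all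
    ultimately show "\<exists>f \<in> J. \<exists>g \<in> E. h = f - g \<and>
        (f = 0 \<or> g = 0 \<or> (f \<noteq> 0 \<and> g \<noteq> 0 \<and> lm ord f \<noteq> lm ord g))"
      by (metis neg_equal_0_iff_equal)
  qed
  show ?thesis
    using distinct_lm_split_zero[OF J E] unfolding split_iff by auto
qed

end

locale monomial_ord_fin = monomial_ord ord
  for ord :: "('v::finite \<Rightarrow>\<^sub>0 nat) \<Rightarrow> ('v \<Rightarrow>\<^sub>0 nat) \<Rightarrow> bool"
begin

lemma wfp_ord_strict: "wfp ord_strict"
  unfolding wfp_def wf_iff_no_infinite_down_chain
proof (rule notI, elim exE)
  fix f :: "nat \<Rightarrow> 'v \<Rightarrow>\<^sub>0 nat"
  assume "\<forall>i. (f (Suc i), f i) \<in> {(s, t). ord_strict s t}"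
  then have chain: "ord_strict (f (Suc i)) (f i)" for i
    by simp
  obtain i j where "i < j" "monom_le (f i) (f j)"
    by (rule dickson)
  have "ord (f (Suc n)) (f n)" for n
    using chain[of n] by (rule mo.less_imp_le)
  then have "ord (f j) (f (Suc i))"
    by (rule mo.lift_Suc_antimono_le) (use \<open>i < j\<close> in simp)
  then have "ord (f i) (f (Suc i))"
    using ord_monom_le[OF \<open>monom_le (f i) (f j)\<close>] by (rule mo.order_trans[rotated])
  then show False
    using chain[of i] by (simp add: mo.leD)
qed

lemma ord_strict_induct [case_names less]:
  assumes "\<And>t. (\<And>s. ord_strict s t \<Longrightarrow> P s) \<Longrightarrow> P t"
  shows "P t"
  using wfp_ord_strict assms by (rule wfp_induct_rule)

lemma groebner_basis_exists:
  fixes I :: "('v, 'a::field) mpoly set"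
  assumes I: "is_ideal I"
  obtains G where "groebner_basis ord I G"
proof -
  obtain F where F: "F \<subseteq> LMs ord I" "finite F" "LMs ord I \<subseteq> multiples F"
    by (rule finite_minimal_generators)
  have "\<forall>t\<in>F. \<exists>h. h \<in> I \<and> h \<noteq> 0 \<and> lm ord h = t"
  proof
    fix t assume "t \<in> F"
    then have "t \<in> LMs ord I"
      using F(1) by blast
    then show "\<exists>h. h \<in> I \<and> h \<noteq> 0 \<and> lm ord h = t"
      unfolding LMs_def by auto
  qed
  then have "\<exists>g. \<forall>t\<in>F. g t \<in> I \<and> g t \<noteq> 0 \<and> lm ord (g t) = t"
    by (rule bchoice)
  then obtain g where g: "\<forall>t\<in>F. g t \<in> I \<and> g t \<noteq> 0 \<and> lm ord (g t) = t"
    by blast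
  have "multiples F \<subseteq> multiples (LMs ord I)"
    using F(1) unfolding multiples_def by blast
  then have "multiples F = LMs ord I"
    using F(3) multiples_LMs[OF I] by blast
  then have "init_ideal ord I = ideal_gen (mono ` F)"
    unfolding init_ideal_eq[OF I] ideal_gen_monomials by simp
  also have "mono ` F = {mono (lm ord h) | h. h \<in> g ` F}"
  proof -
    have "(\<lambda>t. lm ord (g t)) ` F = F"
      using g by simp
    moreover have "{mono (lm ord h) | h. h \<in> g ` F} = mono ` (\<lambda>t. lm ord (g t)) ` F"
      by auto
    ultimately have "{mono (lm ord h) | h. h \<in> g ` F} = mono ` F"
      by simp
    then show ?thesis ..
  qed
  finally have "init_ideal ord I = ideal_gen {mono (lm ord h) | h. h \<in> g ` F}" .
  moreover have "finite (g ` F)" "g ` F \<subseteq> I" "0 \<notin> g ` F"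
    using g F(2) by auto
  ultimately have "groebner_basis ord I (g ` F)"
    unfolding groebner_basis_def by blast
  then show thesis ..
qed

lemma split_of_LMs_ideal_sum:
  fixes X Y :: "('v, 'a::field) mpoly set"
  assumes X: "is_ideal X" and Y: "is_ideal Y"
    and LMs_sum: "LMs ord (ideal_sum X Y) \<subseteq> LMs ord X \<union> LMs ord Y"
    and h: "h \<in> ideal_sum X Y"
  shows "distinct_lm_split ord X Y h"
proof -
  have "\<forall>h\<in>ideal_sum X Y. lm ord h = t \<longrightarrow> distinct_lm_split ord X Y h" for t
  proof (induction t rule: ord_strict_induct)
    case (less t)
    show ?case
    proof (intro ballI impI)
      fix h assume h: "h \<in> ideal_sum X Y" "lm ord h = t"
      show "distinct_lm_split ord X Y h"
      proof (cases "h = 0")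
        case True
        then show ?thesis
          using distinct_lm_split_zero[OF X Y] by simp
      next
        case False
        then obtain k where k: "k \<in> X \<or> k \<in> Y" "k \<noteq> 0" "lm ord k = t" "h - k \<in> ideal_sum X Y"
          and lower: "h - k = 0 \<or> ord_strict (lm ord (h - k)) (lm ord k)"
          using cancel_lm_in_ideal_sum[OF X Y LMs_sum h(1)] h(2) by metis
        have rest: "distinct_lm_split ord X Y (h - k)"
        proof (cases "h - k = 0")
          case True
          then show ?thesis
            using distinct_lm_split_zero[OF X Y] by simp
        next
          case False
          then show ?thesis
            using less.IH[of "lm ord (h - k)"] lower k(3,4) by blast
        qed
        from k(1) show ?thesis
        proof
          assume "k \<in> X"
          then show ?thesis
            using distinct_lm_split_add_leading[OF X _ k(2) rest lower] by simp
        next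
          assume "k \<in> Y"
          then show ?thesis
            using distinct_lm_split_add_leading[OF Y _ k(2), of X "h - k"] rest lower
            by (simp add: distinct_lm_split_commute)
        qed
      qed
    qed
  qed
  then show ?thesis
    using h by blast
qed

lemma split_of_LMs_Int:
  fixes X Y :: "('v, 'a::field) mpoly set"
  assumes X: "is_ideal X" and Y: "is_ideal Y"
    and LMs_Int: "LMs ord X \<inter> LMs ord Y \<subseteq> LMs ord (X \<inter> Y)"
    and h: "h \<in> ideal_sum X Y"
  shows "distinct_lm_split ord X Y h"
proof -
  have claim: "\<forall>f\<in>X. \<forall>g\<in>Y. (f = 0 \<or> ord (lm ord f) t) \<longrightarrow> (g = 0 \<or> ord (lm ord g) t)
      \<longrightarrow> distinct_lm_split ord X Y (f + g)" for t
  proof (induction t rule: ord_strict_induct)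
    case (less t)
    show ?case
    proof (intro ballI impI)
      fix f g assume fg: "f \<in> X" "g \<in> Y" and bound: "f = 0 \<or> ord (lm ord f) t"
      show "distinct_lm_split ord X Y (f + g)"
      proof (cases "f = 0 \<or> g = 0 \<or> lm ord f \<noteq> lm ord g")
        case True
        then show ?thesis
          unfolding distinct_lm_split_def using fg by blast
      next
        case False
        then have f: "f \<noteq> 0" and g: "g \<noteq> 0" and same: "lm ord g = lm ord f"
          by auto
        show ?thesis
        proof (rule common_lm_transfer[OF X Y LMs_Int fg f g same])
          assume "distinct_lm_split ord X Y (f + g)"
          then show ?thesis .
        next
          fix f1 g1
          assume lower: "f1 \<in> X" "g1 \<in> Y" "f + g = f1 + g1" "lm ord g1 = lm ord f1"
            "ord_strict (lm ord f1) (lm ord f)"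
          then have "ord_strict (lm ord f1) t"
            using bound f mo.less_le_trans by auto
          then show ?thesis
            using less.IH[of "lm ord f1"] lower by auto
        qed
      qed
    qed
  qed
  obtain f g where "f \<in> X" "g \<in> Y" "h = f + g"
    using h unfolding ideal_sum_def by blast
  then show ?thesis
    using claim[of "mo.max (lm ord f) (lm ord g)"] mo.max.cobounded1 mo.max.cobounded2 by blast
qed

end

theorem theorem1p1:
  fixes ord :: "('v::finite \<Rightarrow>\<^sub>0 nat) \<Rightarrow> ('v \<Rightarrow>\<^sub>0 nat) \<Rightarrow> bool"
    and J E :: "('v, 'a::field) mpoly set"
  assumes "monomial_order ord"
    and "is_ideal J" and "is_ideal E"
  defines "A \<equiv> init_ideal ord (ideal_sum J E) = ideal_sum (init_ideal ord J) (init_ideal ord E)"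
    and "B \<equiv> (\<forall>GJ GE. groebner_basis ord J GJ \<and> groebner_basis ord E GE
               \<longrightarrow> groebner_basis ord (ideal_sum J E) (GJ \<union> GE))"
    and "C \<equiv> (\<exists>GJ GE. groebner_basis ord J GJ \<and> groebner_basis ord E GE
               \<and> groebner_basis ord (ideal_sum J E) (GJ \<union> GE))"
    and "D \<equiv> init_ideal ord (J \<inter> E) = init_ideal ord J \<inter> init_ideal ord E"
    and "F1 \<equiv> (\<forall>f g. f \<in> J \<and> f \<noteq> 0 \<and> g \<in> E \<and> g \<noteq> 0 \<longrightarrow>
               (\<exists>h \<in> J \<inter> E. h \<noteq> 0 \<and> lm ord h = mlcm (lm ord f) (lm ord g)))"
    and "F2 \<equiv> (\<forall>h \<in> ideal_sum J E. h \<noteq> 0 \<longrightarrow>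
               (\<exists>f \<in> J. \<exists>g \<in> E. h = f - g \<and>
                  (f = 0 \<or> g = 0 \<or> (f \<noteq> 0 \<and> g \<noteq> 0 \<and> lm ord f \<noteq> lm ord g))))"
  shows "(A \<longleftrightarrow> B) \<and> (A \<longleftrightarrow> C) \<and> (A \<longleftrightarrow> D) \<and> (A \<longleftrightarrow> F1) \<and> (A \<longleftrightarrow> F2)"
proof -
  interpret monomial_ord_fin ord
    by unfold_locales (fact assms(1))
  have J: "is_ideal J" and E: "is_ideal E" by fact+
  let ?split = "\<forall>h \<in> ideal_sum J E. distinct_lm_split ord J E h"
  have A_split: "A \<longleftrightarrow> ?split"
    unfolding A_def init_ideal_ideal_sum_iff[OF J E]
    using LMs_ideal_sum_of_split split_of_LMs_ideal_sum[OF J E] by blast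
  have split_D: "?split \<longleftrightarrow> D" and split_F1: "?split \<longleftrightarrow> F1"
    unfolding D_def F1_def init_ideal_Int_iff[OF J E] ex_lm_mlcm_iff[OF J E]
    using LMs_Int_of_split[OF J E] split_of_LMs_Int[OF J E] by blast+
  have split_F2: "?split \<longleftrightarrow> F2"
    unfolding F2_def ex_diff_distinct_lm_iff[OF J E] ..
  obtain GJ GE where "groebner_basis ord J GJ" "groebner_basis ord E GE"
    using groebner_basis_exists[OF J] groebner_basis_exists[OF E] by metis
  then have "A \<longleftrightarrow> B" "A \<longleftrightarrow> C"
    unfolding A_def B_def C_def using groebner_basis_Un_iff[OF J E] by blast+
  then show ?thesis
    using A_split split_D split_F1 split_F2 by blast
qed

end
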